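(* For $\alpha,\beta\in K$, $$\Omega\big(\widetilde{\mathbf f}^+_\alpha(\lambda_1,z),\widetilde{\mathbf f}^-_\beta(\lambda_2,z)\big)=-2\pi\mathbf{i}\,\mathrm{rk}(\alpha)\deg(\beta)+\log\Big((Q\lambda_2^{-1/(n-2)})^{\mathrm{rk}(\alpha)\mathrm{rk}(\beta)}\prod_{s=1}^\kappa\big(1-\eta^{-s}(\lambda_2/\lambda_1)^{1/\kappa}\big)^{(\alpha|\sigma^s\beta)}\Big),$$ where $\kappa=2(n-2)$, $\eta=e^{2\pi\mathbf{i}/\kappa}$, and the right-hand side is expanded as a Laurent series in $\lambda_1^{-1}$ in the region $|\lambda_1|>|\lambda_2|$.
   Context: Fix an integer $n\ge3$; $a_1=n-2$, $a_2=a_3=2$; $X=\mathbb{P}^1_{n-2,2,2}$. $H$ is its Chen–Ruan cohomology with basis $\phi_{0,0}=1$, $\phi_{0,1}=P$, $\phi_{i,p}$ ($1\le i\le3$, $1\le p\le a_i-1$, twisted sectors), pairing $(\phi_{0,0},\phi_{0,1})=1$, $(\phi_{i,p},\phi_{i,a_i-p})=1/a_i$, all other pairings of basis vectors zero. $Q\in\mathbb{C}^*$ with fixed $\log Q$. $K=\mathbb{Z}[L_1,L_2,L_3]/\langle L_i^{a_i}-L_j^{a_j},(L_i-1)(L_j-1):i\neq j\rangle$, $L:=L_1^{n-2}$; $\mathrm{rk}$ ring map $L_i\mapsto1$; $\deg$ additive with $\deg(1)=0$, $\deg(L_i)=1/a_i$, $\deg(EF)=\mathrm{rk}(E)\deg(F)+\mathrm{rk}(F)\deg(E)$;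 $\chi_{j,p}$ ring map with $\chi_{j,p}(L_i)=e^{-2\pi\mathbf{i}p\delta_{j,i}/a_j}$. Calibrated periods: for $\alpha\in K$, $\ell\ge0$: $\widetilde I^{(-\ell-1)}_\alpha(\lambda)=\mathrm{rk}(\alpha)\frac{\lambda^{\ell+1}}{(\ell+1)!}\phi_{0,0}+\frac{\lambda^\ell}{\ell!}(\frac{\mathrm{rk}(\alpha)}{n-2}(\log\lambda-C_\ell)+2\pi\mathbf{i}\deg(\alpha))\phi_{0,1}+\sum_{j,p}\frac{\lambda^{\ell+1-p/a_j}}{(\ell+1-\frac p{a_j})\cdots(1-\frac p{a_j})}\chi_{j,p}(\alpha)\phi_{j,p}$, $C_0=(n-2)\log Q$, $C_{\ell+1}=C_\ell+\frac1{\ell+1}$; and $\widetilde I^{(m)}_\alpha=\partial_\lambda^{m+1}\widetilde I^{(-1)}_\alpha$ for $m\ge0$. $\widetilde{\mathbf f}^+_\alpha(\lambda,z)=\sum_{m\ge0}\widetilde I^{(m)}_\alpha(\lambda)(-z)^m$, $\widetilde{\mathbf f}^-_\alpha(\lambda,z)=\sum_{m<0}\widetilde I^{(m)}_\alpha(\lambda)(-z)^m$. $\Omega(f,g)=\mathrm{Res}_{z=0}(f(-z),g(z))dz$. Euler pairing $\langle a,b\rangle=\chi(a^\vee\otimes b)$ on $K$ and intersection pairing $(a|b)=\langle a,b\rangle+\langle b,a\rangle$; $\sigma:K\to K$ is multiplication by the tangent bundle class $T=L_1+L_2+L_3-L-1$. *)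

theory Defs
  imports "HOL-Analysis.Analysis"
begin

section \<open>Orbifold data for P^1 with orbifold points of orders n-2, 2, 2\<close>

definition aw :: "nat \<Rightarrow> nat \<Rightarrow> nat" where
  "aw n j = (if j = 1 then n - 2 else 2)"

definition kappa :: "nat \<Rightarrow> nat" where
  "kappa n = 2 * (n - 2)"

definition eta :: "nat \<Rightarrow> complex" where
  "eta n = exp (2 * pi * \<i> / of_nat (kappa n))"

section \<open>The K-group, modelled by Laurent polynomials in L1, L2, L3\<close>

text \<open>An element of K is represented by a finitely supported function
  (k1,k2,k3) |-> coefficient of L1^k1 L2^k2 L3^k3 (Laurent polynomial over Z).
  All maps below are well defined on the quotient ring K.\<close>

type_synonym Kel = "int \<times> int \<times> int \<Rightarrow> int"

definition cmp :: "int \<times> int \<times> int \<Rightarrow> nat \<Rightarrow> int" where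
  "cmp m j = (if j = 1 then fst m else if j = 2 then fst (snd m) else snd (snd m))"

definition Ksupp :: "Kel \<Rightarrow> (int \<times> int \<times> int) set" where
  "Ksupp c = {m. c m \<noteq> 0}"

definition Kmon :: "int \<times> int \<times> int \<Rightarrow> Kel" where
  "Kmon m = (\<lambda>x. if x = m then 1 else 0)"

definition Kmult :: "Kel \<Rightarrow> Kel \<Rightarrow> Kel" where
  "Kmult c d = (\<lambda>(k1, k2, k3). \<Sum>(u1, u2, u3)\<in>Ksupp c. c (u1, u2, u3) * d (k1 - u1, k2 - u2, k3 - u3))"

definition Kdual :: "Kel \<Rightarrow> Kel" where
  "Kdual c = (\<lambda>(k1, k2, k3). c (- k1, - k2, - k3))"

definition rk :: "Kel \<Rightarrow> int" where
  "rk c = (\<Sum>m\<in>Ksupp c. c m)"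

definition degK :: "nat \<Rightarrow> Kel \<Rightarrow> real" where
  "degK n c = (\<Sum>m\<in>Ksupp c. of_int (c m) * (\<Sum>j\<in>{1..3}. of_int (cmp m j) / of_nat (aw n j)))"

definition chiK :: "nat \<Rightarrow> nat \<Rightarrow> nat \<Rightarrow> Kel \<Rightarrow> complex" where
  "chiK n j p c = (\<Sum>m\<in>Ksupp c. of_int (c m) *
      exp (- 2 * pi * \<i> * of_nat p * of_int (cmp m j) / of_nat (aw n j)))"

text \<open>Euler characteristic: the line bundle L1^k1 L2^k2 L3^k3 = O(sum k_i x_i) on the orbifold
  P^1 has chi = 1 + sum floor(k_i / a_i) (its sections are those of O(sum floor(k_i/a_i)) on P^1).\<close>
definition eulerK :: "nat \<Rightarrow> Kel \<Rightarrow> int" where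
  "eulerK n c = (\<Sum>m\<in>Ksupp c. c m * ((\<Sum>j\<in>{1..3}. cmp m j div int (aw n j)) + 1))"

definition euler_pair :: "nat \<Rightarrow> Kel \<Rightarrow> Kel \<Rightarrow> int" where
  "euler_pair n a b = eulerK n (Kmult (Kdual a) b)"

definition int_pair :: "nat \<Rightarrow> Kel \<Rightarrow> Kel \<Rightarrow> int" where
  "int_pair n a b = euler_pair n a b + euler_pair n b a"

definition tangent :: "nat \<Rightarrow> Kel" where
  "tangent n = (\<lambda>x. Kmon (1, 0, 0) x + Kmon (0, 1, 0) x + Kmon (0, 0, 1) x
                   - Kmon (int (n - 2), 0, 0) x - Kmon (0, 0, 0) x)"

definition sigmaK :: "nat \<Rightarrow> nat \<Rightarrow> Kel \<Rightarrow> Kel" where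
  "sigmaK n s b = (Kmult (tangent n) ^^ s) b"

section \<open>Chen--Ruan cohomology H\<close>

text \<open>Vectors of H given by coordinates: index (0,0) = 1, (0,1) = P, (j,p) twisted sectors.\<close>
type_synonym Hvec = "nat \<times> nat \<Rightarrow> complex"

definition twisted :: "nat \<Rightarrow> (nat \<times> nat) set" where
  "twisted n = Sigma {1..3} (\<lambda>j. {1..<aw n j})"

definition pairH :: "nat \<Rightarrow> Hvec \<Rightarrow> Hvec \<Rightarrow> complex" where
  "pairH n u v = u (0, 0) * v (0, 1) + u (0, 1) * v (0, 0)
     + (\<Sum>(j, p)\<in>twisted n. u (j, p) * v (j, aw n j - p) / of_nat (aw n j))"

text \<open>lambda is a point of the universal cover of C^*, parametrised by t with lambda = exp t,
  so that log lambda = t and lambda^c = exp (c t).\<close>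

fun Cc :: "nat \<Rightarrow> complex \<Rightarrow> nat \<Rightarrow> complex" where
  "Cc n logQ 0 = of_nat (n - 2) * logQ"
| "Cc n logQ (Suc l) = Cc n logQ l + 1 / of_nat (Suc l)"

text \<open>Ineg n logQ c l t = I^{(-l-1)}_c(lambda) with lambda = exp t.\<close>
definition Ineg :: "nat \<Rightarrow> complex \<Rightarrow> Kel \<Rightarrow> nat \<Rightarrow> complex \<Rightarrow> Hvec" where
  "Ineg n logQ c l t = (\<lambda>(i, p).
     if (i, p) = (0, 0) then of_int (rk c) * exp (of_nat (l + 1) * t) / fact (l + 1)
     else if (i, p) = (0, 1) then exp (of_nat l * t) / fact l *
        (of_int (rk c) / of_nat (n - 2) * (t - Cc n logQ l) + 2 * pi * \<i> * of_real (degK n c))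
     else if (i, p) \<in> twisted n then
        exp ((of_nat (l + 1) - of_nat p / of_nat (aw n i)) * t)
          / (\<Prod>k\<in>{1..l + 1}. of_nat k - of_nat p / of_nat (aw n i)) * chiK n i p c
     else 0)"

text \<open>d/d lambda, expressed in the coordinate t (lambda = exp t).\<close>
definition Dlam :: "(complex \<Rightarrow> complex) \<Rightarrow> complex \<Rightarrow> complex" where
  "Dlam f = (\<lambda>t. exp (- t) * deriv f t)"

text \<open>Ipos n logQ c m t = I^{(m)}_c(lambda) = d^{m+1}/d lambda^{m+1} I^{(-1)}_c, m >= 0.\<close>
definition Ipos :: "nat \<Rightarrow> complex \<Rightarrow> Kel \<Rightarrow> nat \<Rightarrow> complex \<Rightarrow> Hvec" where
  "Ipos n logQ c m t = (\<lambda>idx. (Dlam ^^ Suc m) (\<lambda>s. Ineg n logQ c 0 s idx) t)"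

text \<open>Coefficients of (-z)^m of f^+ and f^-.\<close>
definition fplus :: "nat \<Rightarrow> complex \<Rightarrow> Kel \<Rightarrow> complex \<Rightarrow> int \<Rightarrow> Hvec" where
  "fplus n logQ c t = (\<lambda>m. if 0 \<le> m then Ipos n logQ c (nat m) t else (\<lambda>_. 0))"

definition fminus :: "nat \<Rightarrow> complex \<Rightarrow> Kel \<Rightarrow> complex \<Rightarrow> int \<Rightarrow> Hvec" where
  "fminus n logQ c t = (\<lambda>m. if m < 0 then Ineg n logQ c (nat (- m - 1)) t else (\<lambda>_. 0))"

text \<open>Omega(f,g) = Res_{z=0} (f(-z), g(z)) dz for f(z) = sum_m f_m (-z)^m, g(z) = sum_m g_m (-z)^m:
  the coefficient of z^{-1} is sum_m (-1)^(m+1) (f_m, g_{-1-m}).\<close>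
definition OmegaHas :: "nat \<Rightarrow> (int \<Rightarrow> Hvec) \<Rightarrow> (int \<Rightarrow> Hvec) \<Rightarrow> complex \<Rightarrow> bool" where
  "OmegaHas n f g v \<longleftrightarrow>
     ((\<lambda>m::int. (- 1 :: complex) powi (m + 1) * pairH n (f m) (g (- 1 - m))) has_sum v) UNIV"

end

theory Submission
  imports Defs
begin

text \<open>Only the terms \<open>m \<ge> 0\<close> of the residue pairing survive, and the \<open>m\<close>-th term is computed
  sector by sector. Writing \<open>d = log \<lambda>2 - log \<lambda>1\<close>, the untwisted sectors contribute the constant
  term (at \<open>m = 0\<close>) and \<open>rk \<alpha> rk \<beta> / (n - 2) * exp ((m + 1) d) / (m + 1)\<close>; the twisted sector
  \<open>(j, p)\<close> contributes \<open>\<chi>(j, p, \<alpha>) \<chi>(j, a j - p, \<beta>) / a j * exp ((m + q) d) / (m + q)\<close>, where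
  \<open>q = p / a j\<close>. Summed over \<open>m\<close>, each of these series is the part of \<open>- log (1 - y) = \<Sum> y^N / N\<close>,
  \<open>y = exp (d / \<kappa>)\<close>, supported on one residue class of \<open>N\<close> modulo \<open>\<kappa>\<close>, and it is extracted by
  averaging over the \<open>\<kappa>\<close>-th roots of unity. On the other side, expanding the intersection pairing
  \<open>(\<alpha>|\<sigma>^s \<beta>)\<close> in the characters of \<open>K\<close>, multiplication by the tangent class acts on the
  \<open>(j, p)\<close> character by \<open>exp (2 \<pi> i p / a j)\<close>, which produces exactly the same root-of-unity weights.\<close>

section \<open>Evaluation of K-theory classes at characters\<close>

lemma Kmult_apply: "Kmult c d k = (\<Sum>u\<in>Ksupp c. c u * d (k - u))"
proof -
  have "(k1, k2, k3) - u = (k1 - fst u, k2 - fst (snd u), k3 - snd (snd u))" for k1 k2 k3 :: int and u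
    by (cases u) simp
  then show ?thesis
    unfolding Kmult_def by (cases k) (simp add: case_prod_beta')
qed

lemma Ksupp_Kmult_subset: "Ksupp (Kmult c d) \<subseteq> (\<lambda>(u, v). u + v) ` (Ksupp c \<times> Ksupp d)"
proof
  fix k assume "k \<in> Ksupp (Kmult c d)"
  then have "(\<Sum>u\<in>Ksupp c. c u * d (k - u)) \<noteq> 0"
    by (simp add: Ksupp_def Kmult_apply)
  then obtain u where "u \<in> Ksupp c" "c u * d (k - u) \<noteq> 0"
    by (meson sum.not_neutral_contains_not_neutral)
  then have "(u, k - u) \<in> Ksupp c \<times> Ksupp d"
    by (simp add: Ksupp_def)
  then show "k \<in> (\<lambda>(u, v). u + v) ` (Ksupp c \<times> Ksupp d)"
    by (metis (no_types, lifting) add_diff_cancel_left' case_prod_conv diff_add_cancel image_eqI)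
qed

lemma finite_Ksupp_Kmult:
  "finite (Ksupp c) \<Longrightarrow> finite (Ksupp d) \<Longrightarrow> finite (Ksupp (Kmult c d))"
  by (rule finite_subset[OF Ksupp_Kmult_subset]) auto

lemma Kdual_apply: "Kdual c m = c (- m)"
  unfolding Kdual_def by (cases m) simp

lemma Ksupp_Kdual: "Ksupp (Kdual c) = uminus ` Ksupp c"
proof (rule set_eqI)
  fix m
  have "m \<in> uminus ` Ksupp c \<longleftrightarrow> - m \<in> Ksupp c"
    by (metis imageE image_eqI minus_minus)
  then show "m \<in> Ksupp (Kdual c) \<longleftrightarrow> m \<in> uminus ` Ksupp c"
    by (simp add: Ksupp_def Kdual_apply)
qed

lemma finite_Ksupp_Kdual: "finite (Ksupp c) \<Longrightarrow> finite (Ksupp (Kdual c))"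
  by (simp add: Ksupp_Kdual)

lemma sum_Ksupp_Kdual: "(\<Sum>u\<in>Ksupp (Kdual c). F u) = (\<Sum>u\<in>Ksupp c. F (- u))"
  by (simp add: Ksupp_Kdual sum.reindex inj_on_def)

definition Keval :: "(int \<times> int \<times> int \<Rightarrow> 'a::comm_ring_1) \<Rightarrow> Kel \<Rightarrow> 'a" where
  "Keval g c = (\<Sum>m\<in>Ksupp c. of_int (c m) * g m)"

lemma Keval_superset:
  assumes "finite S" "Ksupp c \<subseteq> S"
  shows "Keval g c = (\<Sum>m\<in>S. of_int (c m) * g m)"
  unfolding Keval_def by (rule sum.mono_neutral_left) (use assms in \<open>auto simp: Ksupp_def\<close>)

lemma sum_translate_Ksupp:
  assumes "finite S" and "(+) u ` Ksupp d \<subseteq> S"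
  shows "(\<Sum>k\<in>S. of_int (d (k - u)) * g k) = (\<Sum>v\<in>Ksupp d. of_int (d v) * g (u + v))"
proof -
  have "d (k - u) = 0" if "k \<notin> (+) u ` Ksupp d" for k
  proof (rule ccontr)
    assume "d (k - u) \<noteq> 0"
    then have "u + (k - u) \<in> (+) u ` Ksupp d"
      by (intro imageI) (simp add: Ksupp_def)
    with that show False
      by simp
  qed
  then have "\<forall>k\<in>S - (+) u ` Ksupp d. of_int (d (k - u)) * g k = 0"
    by simp
  then have "(\<Sum>k\<in>S. of_int (d (k - u)) * g k) = (\<Sum>k\<in>(+) u ` Ksupp d. of_int (d (k - u)) * g k)"
    by (rule sum.mono_neutral_right[OF assms])
  then show ?thesis
    by (simp add: sum.reindex)
qed

lemma Keval_Kmult_double_sum: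
  assumes fc: "finite (Ksupp c)" and fd: "finite (Ksupp d)"
  shows "Keval g (Kmult c d) = (\<Sum>u\<in>Ksupp c. \<Sum>v\<in>Ksupp d. of_int (c u) * of_int (d v) * g (u + v))"
proof -
  define S where "S = (\<lambda>(u, v). u + v) ` (Ksupp c \<times> Ksupp d)"
  have fS: "finite S"
    using fc fd by (simp add: S_def)
  have "(+) u ` Ksupp d \<subseteq> S" if u: "u \<in> Ksupp c" for u
  proof (rule image_subsetI)
    fix v assume "v \<in> Ksupp d"
    with u have "(u, v) \<in> Ksupp c \<times> Ksupp d"
      by simp
    then show "u + v \<in> S"
      unfolding S_def by (metis (no_types) case_prod_conv image_eqI)
  qed
  note shift = sum_translate_Ksupp[OF fS this]
  have "Keval g (Kmult c d) = (\<Sum>k\<in>S. of_int (Kmult c d k) * g k)"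
    by (rule Keval_superset[OF fS]) (simp add: S_def Ksupp_Kmult_subset)
  also have "\<dots> = (\<Sum>k\<in>S. \<Sum>u\<in>Ksupp c. of_int (c u) * (of_int (d (k - u)) * g k))"
    by (simp add: Kmult_apply sum_distrib_right mult.assoc)
  also have "\<dots> = (\<Sum>u\<in>Ksupp c. of_int (c u) * (\<Sum>k\<in>S. of_int (d (k - u)) * g k))"
    by (subst sum.swap) (simp add: sum_distrib_left)
  also have "\<dots> = (\<Sum>u\<in>Ksupp c. of_int (c u) * (\<Sum>v\<in>Ksupp d. of_int (d v) * g (u + v)))"
    by (rule sum.cong) (simp_all add: shift)
  finally show ?thesis
    by (simp add: sum_distrib_left mult.assoc)
qed

lemma Keval_Kmult:
  assumes "finite (Ksupp c)" "finite (Ksupp d)" and "\<And>u v. g (u + v) = g u * g v"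
  shows "Keval g (Kmult c d) = Keval g c * Keval g d"
  unfolding Keval_Kmult_double_sum[OF assms(1,2)] assms(3)
  by (simp add: Keval_def sum_product mult_ac)

lemma Ksupp_tangent_subset:
  "Ksupp (tangent n) \<subseteq> {(1, 0, 0), (0, 1, 0), (0, 0, 1), (int (n - 2), 0, 0), (0, 0, 0)}"
  by (auto simp: Ksupp_def tangent_def Kmon_def split: if_splits)

lemma finite_Ksupp_tangent: "finite (Ksupp (tangent n))"
  by (rule finite_subset[OF Ksupp_tangent_subset]) simp

lemma Keval_tangent:
  "Keval g (tangent n) = g (1, 0, 0) + g (0, 1, 0) + g (0, 0, 1) - g (int (n - 2), 0, 0) - g (0, 0, 0)"
proof -
  define S :: "(int \<times> int \<times> int) set"
    where "S = {(1, 0, 0), (0, 1, 0), (0, 0, 1), (int (n - 2), 0, 0), (0, 0, 0)}"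
  have "Keval g (tangent n) = (\<Sum>m\<in>S. of_int (tangent n m) * g m)"
    unfolding S_def by (rule Keval_superset[OF _ Ksupp_tangent_subset]) simp
  also have "\<dots> = (\<Sum>m\<in>S. (if m = (1, 0, 0) then g m else 0) + (if m = (0, 1, 0) then g m else 0)
      + (if m = (0, 0, 1) then g m else 0) - (if m = (int (n - 2), 0, 0) then g m else 0)
      - (if m = (0, 0, 0) then g m else 0))"
    by (rule sum.cong) (auto simp: tangent_def Kmon_def algebra_simps)
  also have "\<dots> = g (1, 0, 0) + g (0, 1, 0) + g (0, 0, 1) - g (int (n - 2), 0, 0) - g (0, 0, 0)"
    by (simp add: sum.distrib sum_subtractf) (simp add: S_def)
  finally show ?thesis .
qed

lemma finite_Ksupp_sigmaK: "finite (Ksupp b) \<Longrightarrow> finite (Ksupp (sigmaK n s b))"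
  by (induction s) (simp_all add: sigmaK_def finite_Ksupp_Kmult finite_Ksupp_tangent)

lemma Keval_sigmaK:
  assumes "finite (Ksupp b)" and "\<And>u v. g (u + v) = g u * g v"
  shows "Keval g (sigmaK n s b) = Keval g (tangent n) ^ s * Keval g b"
  by (induction s)
    (simp_all add: sigmaK_def Keval_Kmult finite_Ksupp_tangent assms
      finite_Ksupp_sigmaK[OF assms(1), unfolded sigmaK_def])

lemma of_int_rk_eq_Keval: "of_int (rk c) = Keval (\<lambda>_. 1) c"
  by (simp add: rk_def Keval_def)

section \<open>Roots of unity\<close>

definition unit_root :: "nat \<Rightarrow> complex" where
  "unit_root N = exp (2 * pi * \<i> / of_nat N)"

lemma unit_root_nonzero [simp]: "unit_root N \<noteq> 0"
  by (simp add: unit_root_def)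

lemma unit_root_1 [simp]: "unit_root 1 = 1"
  by (simp add: unit_root_def)

lemma unit_root_powi: "unit_root N powi k = exp (2 * pi * \<i> * of_int k / of_nat N)"
  by (simp add: unit_root_def exp_power_int mult_ac)

lemma unit_root_pow: "unit_root N ^ k = exp (2 * pi * \<i> * of_nat k / of_nat N)"
  using unit_root_powi[of N "int k"] by simp

lemma norm_unit_root_powi [simp]: "norm (unit_root N powi k) = 1"
  by (simp add: unit_root_powi)

lemma unit_root_powi_eq_1_iff:
  assumes "0 < N"
  shows "unit_root N powi k = 1 \<longleftrightarrow> int N dvd k"
proof -
  have "unit_root N powi k = 1 \<longleftrightarrow> (\<exists>m::int. 2 * pi * k / N = of_int (2 * m) * pi)"
    by (simp add: unit_root_powi exp_eq_1)
  also have "\<dots> \<longleftrightarrow> (\<exists>m::int. real_of_int k = of_int m * N)"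
    using assms by (auto simp: field_simps)
  also have "\<dots> \<longleftrightarrow> int N dvd k"
    by (auto simp: dvd_def mult.commute) (metis of_int_mult of_int_eq_iff of_int_of_nat_eq)+
  finally show ?thesis .
qed

text \<open>With the junk value \<open>x / 0 = 0\<close>, \<open>unit_root 0 = 1\<close>, so this needs no hypothesis on \<open>N\<close>.\<close>
lemma unit_root_powi_mult_self [simp]: "unit_root N powi (int N * k) = 1"
proof (cases "N = 0")
  case False
  then show ?thesis by (simp add: unit_root_powi_eq_1_iff)
qed (simp add: unit_root_def)

lemma unit_root_pow_div_mult:
  assumes "0 < K" "a dvd K"
  shows "unit_root K ^ (K div a * p) = unit_root a ^ p"
proof -
  have "unit_root K ^ (K div a * p) = exp (2 * pi * \<i> * of_nat (K div a * p) / of_nat K)"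
    by (rule unit_root_pow)
  also have "\<dots> = exp (2 * pi * \<i> * of_nat p / of_nat a)"
    using assms by (auto simp: mult_ac)
  also have "\<dots> = unit_root a ^ p"
    by (rule unit_root_pow[symmetric])
  finally show ?thesis .
qed

lemma sum_unit_root_powers:
  assumes "0 < N"
  shows "(\<Sum>p<N. (unit_root N powi k) ^ p) = (if int N dvd k then of_nat N else 0)"
proof -
  have "(unit_root N powi k) ^ N = unit_root N powi (int N * k)"
    by (metis power_int_mult power_int_of_nat mult.commute)
  then have "(\<Sum>p<N. (unit_root N powi k) ^ p) = (if unit_root N powi k = 1 then of_nat N else 0)"
    by (simp add: sum_gp_strict)
  then show ?thesis
    by (simp only: unit_root_powi_eq_1_iff[OF assms])
qed

lemma sum_unit_root_powers_atLeast1: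
  assumes "0 < N"
  shows "(\<Sum>s\<in>{1..N}. (unit_root N powi k) ^ s) = (if int N dvd k then of_nat N else 0)"
proof -
  have "(\<Sum>s\<in>{1..N}. (unit_root N powi k) ^ s) = unit_root N powi k * (\<Sum>p<N. (unit_root N powi k) ^ p)"
    by (simp add: sum.atLeast1_atMost_eq sum_distrib_left)
  then show ?thesis
    by (simp add: sum_unit_root_powers[OF assms] unit_root_powi_eq_1_iff[OF assms])
qed

section \<open>The intersection pairing in terms of characters\<close>

definition sector_char :: "nat \<Rightarrow> nat \<Rightarrow> int \<Rightarrow> int \<times> int \<times> int \<Rightarrow> complex" where
  "sector_char n j k m = unit_root (aw n j) powi (k * cmp m j)"

lemma cmp_add: "cmp (u + v) j = cmp u j + cmp v j"
  by (simp add: cmp_def)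

lemma cmp_diff: "cmp (u - v) j = cmp u j - cmp v j"
  by (simp add: cmp_def)

lemma sector_char_add: "sector_char n j k (u + v) = sector_char n j k u * sector_char n j k v"
  by (simp add: sector_char_def cmp_add distrib_left power_int_add)

lemma sector_char_0 [simp]: "sector_char n j 0 = (\<lambda>_. 1)"
  by (simp add: sector_char_def fun_eq_iff)

lemma sector_char_periodic: "sector_char n j (k + int (aw n j)) = sector_char n j k"
  by (simp add: sector_char_def fun_eq_iff distrib_right power_int_add mult.assoc)

lemma chiK_eq_Keval: "chiK n j p = Keval (sector_char n j (- int p))"
  by (simp add: fun_eq_iff chiK_def Keval_def sector_char_def unit_root_powi mult_ac)

lemma Keval_sector_char_tangent: "Keval (sector_char n j k) (tangent n) = unit_root (aw n j) powi k"
  by (simp add: Keval_tangent sector_char_def cmp_def aw_def mult.commute[of k])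

lemma Keval_sector_char_sigmaK:
  assumes "finite (Ksupp b)"
  shows "Keval (sector_char n j k) (sigmaK n s b) = (unit_root (aw n j) powi k) ^ s * Keval (sector_char n j k) b"
  by (simp add: Keval_sigmaK assms sector_char_add Keval_sector_char_tangent)

lemma rk_sigmaK:
  assumes "finite (Ksupp b)"
  shows "rk (sigmaK n s b) = rk b"
proof -
  have "rk (tangent n) = 1"
    using Keval_tangent[of "\<lambda>_. 1 :: int"] by (simp add: of_int_rk_eq_Keval[where 'a = int, symmetric])
  then show ?thesis
    using Keval_sigmaK[OF assms, of "\<lambda>_. 1 :: int"] by (simp add: of_int_rk_eq_Keval[where 'a = int, symmetric])
qed

definition euler_mon :: "nat \<Rightarrow> int \<times> int \<times> int \<Rightarrow> int" where
  "euler_mon n m = (\<Sum>j\<in>{1..3}. cmp m j div int (aw n j)) + 1"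

lemma int_pair_double_sum:
  assumes "finite (Ksupp a)" "finite (Ksupp c)"
  shows "int_pair n a c
    = (\<Sum>u\<in>Ksupp a. \<Sum>v\<in>Ksupp c. a u * c v * (euler_mon n (v - u) + euler_mon n (u - v)))"
proof -
  have eulerK: "eulerK n c = Keval (euler_mon n) c" for c
    by (simp add: eulerK_def Keval_def euler_mon_def)
  have "euler_pair n a c = (\<Sum>u\<in>Ksupp a. \<Sum>v\<in>Ksupp c. a u * c v * euler_mon n (v - u))"
    by (simp add: euler_pair_def eulerK Keval_Kmult_double_sum finite_Ksupp_Kdual assms
        sum_Ksupp_Kdual Kdual_apply)
  moreover have "euler_pair n c a = (\<Sum>u\<in>Ksupp a. \<Sum>v\<in>Ksupp c. a u * c v * euler_mon n (u - v))"
    by (simp add: euler_pair_def eulerK Keval_Kmult_double_sum finite_Ksupp_Kdual assms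
        sum_Ksupp_Kdual Kdual_apply sum.swap[of _ "Ksupp c"] mult_ac)
  ultimately show ?thesis
    by (simp add: int_pair_def sum.distrib ring_distribs)
qed

lemma zdiv_add_zdiv_uminus: "(0::int) < a \<Longrightarrow> k div a + (- k) div a = (if a dvd k then 0 else -1)"
  by (auto simp: zdiv_zminus1_eq_if dvd_eq_mod_eq_0)

lemma euler_mon_add_uminus:
  assumes "3 \<le> n"
  shows "euler_mon n m + euler_mon n (- m) = (\<Sum>j\<in>{1..3}. of_bool (int (aw n j) dvd cmp m j)) - 1"
proof -
  have "cmp (- m) j = - cmp m j" for j
    by (cases m) (simp add: cmp_def)
  then have "euler_mon n m + euler_mon n (- m)
      = 2 + (\<Sum>j\<in>{1..3}. cmp m j div int (aw n j) + (- cmp m j) div int (aw n j))"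
    by (simp add: euler_mon_def sum.distrib)
  also have "\<dots> = 2 + (\<Sum>j\<in>{1..3}. if int (aw n j) dvd cmp m j then 0 else -1)"
    using assms by (simp add: zdiv_add_zdiv_uminus aw_def)
  also have "\<dots> = (\<Sum>j\<in>{1..3}. of_bool (int (aw n j) dvd cmp m j)) - 1"
    by (simp add: numeral_3_eq_3 atLeastAtMostSuc_conv)
  finally show ?thesis .
qed

lemma euler_mon_symmetrized_characters:
  assumes "3 \<le> n"
  shows "of_int (euler_mon n (v - u) + euler_mon n (u - v))
    = (\<Sum>j\<in>{1..3}. \<Sum>p<aw n j. sector_char n j (- int p) u * sector_char n j (int p) v / of_nat (aw n j)) - 1"
proof -
  have indicator: "(of_bool (int (aw n j) dvd cmp (v - u) j) :: complex)
      = (\<Sum>p<aw n j. sector_char n j (- int p) u * sector_char n j (int p) v) / of_nat (aw n j)" for j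
  proof -
    have "(unit_root (aw n j) powi cmp (v - u) j) ^ p = sector_char n j (- int p) u * sector_char n j (int p) v" for p
    proof -
      have "(unit_root (aw n j) powi cmp (v - u) j) ^ p = unit_root (aw n j) powi (cmp (v - u) j * int p)"
        by (simp add: power_int_mult)
      also have "\<dots> = unit_root (aw n j) powi (- int p * cmp u j + int p * cmp v j)"
        by (simp add: cmp_diff algebra_simps)
      finally show ?thesis
        by (simp only: sector_char_def power_int_add[OF disjI1[OF unit_root_nonzero]])
    qed
    moreover have "0 < aw n j"
      using assms by (simp add: aw_def)
    ultimately show ?thesis
      using sum_unit_root_powers[of "aw n j" "cmp (v - u) j"] by simp
  qed
  have "(of_int (euler_mon n (v - u) + euler_mon n (u - v)) :: complex)
      = (\<Sum>j\<in>{1..3}. of_bool (int (aw n j) dvd cmp (v - u) j)) - 1"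
    using euler_mon_add_uminus[OF assms, of "v - u"] by simp
  then show ?thesis
    by (simp only: indicator sum_divide_distrib)
qed

lemma sum_swap_nested:
  "(\<Sum>u\<in>U. \<Sum>v\<in>V. \<Sum>j\<in>J. \<Sum>p\<in>P j. f u v j p) = (\<Sum>j\<in>J. \<Sum>p\<in>P j. \<Sum>u\<in>U. \<Sum>v\<in>V. f u v j p)"
proof -
  have "(\<Sum>v\<in>V. \<Sum>j\<in>J. \<Sum>p\<in>P j. f u v j p) = (\<Sum>j\<in>J. \<Sum>p\<in>P j. \<Sum>v\<in>V. f u v j p)" for u
    by (subst sum.swap) (simp only: sum.swap[of _ V])
  then have "(\<Sum>u\<in>U. \<Sum>v\<in>V. \<Sum>j\<in>J. \<Sum>p\<in>P j. f u v j p) = (\<Sum>u\<in>U. \<Sum>j\<in>J. \<Sum>p\<in>P j. \<Sum>v\<in>V. f u v j p)"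
    by simp
  also have "\<dots> = (\<Sum>j\<in>J. \<Sum>p\<in>P j. \<Sum>u\<in>U. \<Sum>v\<in>V. f u v j p)"
    by (subst sum.swap) (simp only: sum.swap[of _ U])
  finally show ?thesis .
qed

lemma int_pair_character_expansion:
  assumes n: "3 \<le> n" and fin: "finite (Ksupp a)" "finite (Ksupp c)"
  shows "of_int (int_pair n a c)
    = (\<Sum>j\<in>{1..3}. \<Sum>p<aw n j. chiK n j p a * Keval (sector_char n j (int p)) c / of_nat (aw n j))
      - of_int (rk a) * of_int (rk c)"
proof -
  have "of_int (int_pair n a c) = (\<Sum>u\<in>Ksupp a. \<Sum>v\<in>Ksupp c.
      of_int (a u) * of_int (c v) * ((\<Sum>j\<in>{1..3}. \<Sum>p<aw n j.
        sector_char n j (- int p) u * sector_char n j (int p) v / of_nat (aw n j)) - 1))"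
    by (simp only: int_pair_double_sum[OF fin] of_int_sum of_int_mult euler_mon_symmetrized_characters[OF n])
  also have "\<dots> = (\<Sum>u\<in>Ksupp a. \<Sum>v\<in>Ksupp c. \<Sum>j\<in>{1..3}. \<Sum>p<aw n j.
        of_int (a u) * sector_char n j (- int p) u * (of_int (c v) * sector_char n j (int p) v) / of_nat (aw n j))
      - (\<Sum>u\<in>Ksupp a. \<Sum>v\<in>Ksupp c. of_int (a u) * of_int (c v))"
    by (simp add: right_diff_distrib sum_subtractf sum_distrib_left mult_ac)
  also have "\<dots> = (\<Sum>j\<in>{1..3}. \<Sum>p<aw n j. chiK n j p a * Keval (sector_char n j (int p)) c / of_nat (aw n j))
      - of_int (rk a) * of_int (rk c)"
    by (simp only: sum_swap_nested chiK_eq_Keval of_int_rk_eq_Keval Keval_def sum_product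
        times_divide_eq_left sum_divide_distrib mult_1_right)
  finally show ?thesis .
qed

lemma int_pair_sigmaK:
  assumes n: "3 \<le> n" and fin: "finite (Ksupp a)" "finite (Ksupp b)"
  shows "of_int (int_pair n a (sigmaK n s b)) = of_int (rk a * rk b) / of_nat (n - 2)
    + (\<Sum>(j, p)\<in>twisted n. chiK n j p a * chiK n j (aw n j - p) b / of_nat (aw n j) * unit_root (aw n j) ^ (p * s))"
proof -
  have aw_pos: "0 < aw n j" for j
    using n by (simp add: aw_def)
  have twisted_char: "Keval (sector_char n j (int p)) (sigmaK n s b)
      = unit_root (aw n j) ^ (p * s) * chiK n j (aw n j - p) b" if "p \<le> aw n j" for j p
  proof -
    have "sector_char n j (- int (aw n j - p)) = sector_char n j (int p)"
      using sector_char_periodic[of n j "int p - int (aw n j)"] that by simp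
    then show ?thesis
      by (simp add: Keval_sector_char_sigmaK fin chiK_eq_Keval power_mult)
  qed
  have rk_char: "Keval (sector_char n j 0) c = of_int (rk c)" for j c
    by (simp add: of_int_rk_eq_Keval)
  have "(\<Sum>j\<in>{1..3}. \<Sum>p<aw n j. chiK n j p a * Keval (sector_char n j (int p)) (sigmaK n s b) / of_nat (aw n j))
      = (\<Sum>j\<in>{1..3}. of_int (rk a) * of_int (rk b) / of_nat (aw n j)
          + (\<Sum>p\<in>{1..<aw n j}. chiK n j p a * chiK n j (aw n j - p) b * unit_root (aw n j) ^ (p * s) / of_nat (aw n j)))"
  proof (rule sum.cong[OF refl])
    fix j
    have "{..<aw n j} = insert 0 {1..<aw n j}"
      using aw_pos[of j] by auto
    then show "(\<Sum>p<aw n j. chiK n j p a * Keval (sector_char n j (int p)) (sigmaK n s b) / of_nat (aw n j))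
      = of_int (rk a) * of_int (rk b) / of_nat (aw n j)
          + (\<Sum>p\<in>{1..<aw n j}. chiK n j p a * chiK n j (aw n j - p) b * unit_root (aw n j) ^ (p * s) / of_nat (aw n j))"
      using rk_char[of j "sigmaK n s b"] rk_char[of j a]
      by (simp add: twisted_char rk_sigmaK fin chiK_eq_Keval mult_ac)
  qed
  moreover have "(\<Sum>j\<in>{1..3}. of_int (rk a) * of_int (rk b) / of_nat (aw n j))
      = of_int (rk a * rk b) / of_nat (n - 2) + of_int (rk a) * (of_int (rk b) :: complex)"
    by (simp add: numeral_3_eq_3 atLeastAtMostSuc_conv aw_def)
  ultimately show ?thesis
    by (simp add: int_pair_character_expansion n fin finite_Ksupp_sigmaK rk_sigmaK sum.distrib
        twisted_def sum.Sigma mult_ac)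
qed

section \<open>Components of the calibrated periods\<close>

lemma Dlam_eq:
  assumes "\<And>t. (f has_field_derivative f' t) (at t)"
  shows "Dlam f = (\<lambda>t. exp (- t) * f' t)"
  using assms by (simp add: Dlam_def DERIV_imp_deriv fun_eq_iff)

lemma Dlam_exp: "Dlam (\<lambda>s. c * exp (d * s)) = (\<lambda>s. c * d * exp ((d - 1) * s))"
proof -
  have "Dlam (\<lambda>s. c * exp (d * s)) = (\<lambda>t. exp (- t) * (c * (exp (d * t) * d)))"
    by (rule Dlam_eq) (auto intro!: derivative_eq_intros)
  also have "\<dots> = (\<lambda>s. c * d * exp ((d - 1) * s))"
    by (simp add: fun_eq_iff exp_diff exp_minus field_simps)
  finally show ?thesis .
qed

lemma funpow_Dlam_exp:
  "(Dlam ^^ k) (\<lambda>s. c * exp (d * s)) = (\<lambda>s. (- 1) ^ k * pochhammer (- d) k * c * exp ((d - of_nat k) * s))"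
proof (induction k)
  case (Suc k)
  have "(Dlam ^^ Suc k) (\<lambda>s. c * exp (d * s))
      = (\<lambda>s. (- 1) ^ k * pochhammer (- d) k * c * (d - of_nat k) * exp ((d - of_nat k - 1) * s))"
    using Dlam_exp[of "(- 1) ^ k * pochhammer (- d) k * c" "d - of_nat k"] by (simp add: Suc.IH)
  then show ?case
    by (simp add: pochhammer_Suc algebra_simps)
qed simp

lemma Ipos_unit: "Ipos n logQ c m t (0, 0) = (if m = 0 then of_int (rk c) else 0)"
proof -
  have unit: "(\<lambda>s. Ineg n logQ c 0 s (0, 0)) = (\<lambda>s. of_int (rk c) * exp (1 * s))"
    by (simp add: Ineg_def)
  have "pochhammer (- 1 :: complex) (Suc m) = 0 \<longleftrightarrow> m \<noteq> 0"
    by (auto simp: pochhammer_eq_0_iff intro: exI[of _ 1])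
  then show ?thesis
    unfolding Ipos_def unit funpow_Dlam_exp by auto
qed

lemma Ipos_point:
  assumes "3 \<le> n"
  shows "Ipos n logQ c m t (0, 1) = (- 1) ^ m * fact m * of_int (rk c) / of_nat (n - 2) * exp (- of_nat (Suc m) * t)"
proof -
  have "(of_nat n :: complex) \<noteq> of_nat 2"
    using assms by (simp only: of_nat_eq_iff)
  then have "Dlam (\<lambda>s. Ineg n logQ c 0 s (0, 1)) = (\<lambda>s. exp (- s) * (of_int (rk c) / of_nat (n - 2)))"
    by (intro Dlam_eq) (use assms in \<open>auto simp: Ineg_def intro!: derivative_eq_intros\<close>)
  also have "\<dots> = (\<lambda>s. of_int (rk c) / of_nat (n - 2) * exp ((- 1) * s))"
    by (simp add: fun_eq_iff mult.commute)
  finally have point: "Dlam (\<lambda>s. Ineg n logQ c 0 s (0, 1)) = \<dots>" .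
  show ?thesis
    unfolding Ipos_def funpow_Suc_right comp_def point funpow_Dlam_exp
    by (simp add: pochhammer_fact algebra_simps)
qed

lemma Ipos_twisted:
  assumes "(j, p) \<in> twisted n"
  shows "Ipos n logQ c m t (j, p) = (- 1) ^ m * pochhammer (of_nat p / of_nat (aw n j)) m * chiK n j p c
      * exp (- (of_nat m + of_nat p / of_nat (aw n j)) * t)"
proof -
  define q :: complex where "q = of_nat p / of_nat (aw n j)"
  have "q \<noteq> 1"
    using assms by (auto simp: q_def twisted_def)
  have twisted: "(\<lambda>s. Ineg n logQ c 0 s (j, p)) = (\<lambda>s. chiK n j p c / (1 - q) * exp ((1 - q) * s))"
    using assms by (auto simp: Ineg_def twisted_def q_def fun_eq_iff)
  show ?thesis
    unfolding Ipos_def twisted funpow_Dlam_exp q_def[symmetric]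
    using \<open>q \<noteq> 1\<close> by (simp add: pochhammer_rec field_simps)
qed

lemma Ineg_twisted_dual:
  assumes "(j, p) \<in> twisted n"
  shows "Ineg n logQ c m t (j, aw n j - p) = exp ((of_nat m + of_nat p / of_nat (aw n j)) * t)
      / pochhammer (of_nat p / of_nat (aw n j)) (Suc m) * chiK n j (aw n j - p) c"
proof -
  define q :: complex where "q = of_nat p / of_nat (aw n j)"
  have "(j, aw n j - p) \<in> twisted n" and "j \<noteq> 0"
    using assms by (auto simp: twisted_def)
  then have "Ineg n logQ c m t (j, aw n j - p) = exp ((of_nat (Suc m) - of_nat (aw n j - p) / of_nat (aw n j)) * t)
      / (\<Prod>k\<in>{1..Suc m}. of_nat k - of_nat (aw n j - p) / of_nat (aw n j)) * chiK n j (aw n j - p) c"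
    by (simp add: Ineg_def del: prod.cl_ivl_Suc)
  also have "of_nat (aw n j - p) / of_nat (aw n j) = 1 - q"
    using assms by (auto simp: twisted_def q_def field_simps)
  also have "(\<Prod>k\<in>{1..Suc m}. of_nat k - (1 - q)) = pochhammer q (Suc m)"
    by (simp add: pochhammer_prod prod.atLeast1_atMost_eq atLeast0LessThan algebra_simps del: prod.cl_ivl_Suc)
  finally show ?thesis
    by (simp add: q_def)
qed

lemma pairing_unit_point:
  assumes "3 \<le> n"
  shows "(- 1) ^ Suc m * (Ipos n logQ a m t1 (0, 0) * Ineg n logQ b m t2 (0, 1))
    = (if m = 0 then - 2 * pi * \<i> * of_int (rk a) * of_real (degK n b)
        + of_int (rk a * rk b) * (logQ - t2 / of_nat (n - 2)) else 0)"
proof -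
  have "of_nat (n - 2) \<noteq> (0 :: complex)"
    using assms by (simp only: of_nat_eq_0_iff)
  then show ?thesis
    by (simp add: Ipos_unit Ineg_def field_simps del: of_nat_diff)
qed

lemma pairing_point_unit:
  assumes "3 \<le> n"
  shows "(- 1) ^ Suc m * (Ipos n logQ a m t1 (0, 1) * Ineg n logQ b m t2 (0, 0))
    = - (of_int (rk a * rk b) / of_nat (n - 2)) * (exp (of_nat (Suc m) * (t2 - t1)) / of_nat (Suc m))"
proof -
  define r :: complex where "r = of_nat (Suc m)"
  define N :: complex where "N = of_nat (n - 2)"
  have "r \<noteq> 0" "N \<noteq> 0"
    using assms by (simp_all only: r_def N_def of_nat_eq_0_iff)
  have unit: "Ineg n logQ b m t2 (0, 0) = of_int (rk b) * exp (r * t2) / (r * fact m)"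
    by (simp add: Ineg_def r_def)
  have "(- 1) ^ Suc m * (Ipos n logQ a m t1 (0, 1) * Ineg n logQ b m t2 (0, 0))
      = (- 1) ^ Suc m * ((- 1) ^ m * fact m * of_int (rk a) / N * exp (- r * t1))
        * (of_int (rk b) * exp (r * t2) / (r * fact m))"
    by (simp only: Ipos_point[OF assms] unit N_def[symmetric] r_def[symmetric] mult.assoc)
  also have "\<dots> = - (of_int (rk a * rk b) / N) * (exp (- r * t1) * exp (r * t2) / r)"
    using \<open>r \<noteq> 0\<close> \<open>N \<noteq> 0\<close> by (simp add: field_simps)
  also have "exp (- r * t1) * exp (r * t2) = exp (r * (t2 - t1))"
    by (simp add: exp_add[symmetric] algebra_simps)
  finally show ?thesis
    by (simp only: r_def N_def)
qed

lemma pairing_twisted: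
  assumes "(j, p) \<in> twisted n"
  shows "(- 1) ^ Suc m * (Ipos n logQ a m t1 (j, p) * Ineg n logQ b m t2 (j, aw n j - p) / of_nat (aw n j))
    = - (chiK n j p a * chiK n j (aw n j - p) b / of_nat (aw n j))
      * (exp ((of_nat m + of_nat p / of_nat (aw n j)) * (t2 - t1)) / (of_nat m + of_nat p / of_nat (aw n j)))"
proof -
  define q :: complex where "q = of_nat p / of_nat (aw n j)"
  define r where "r = of_nat m + q"
  have "0 < Re q" and "of_nat (aw n j) \<noteq> (0 :: complex)"
    using assms by (auto simp: q_def twisted_def)
  then have "pochhammer q m \<noteq> 0" and "r \<noteq> 0"
    by (auto simp: pochhammer_eq_0_iff r_def dest: arg_cong[where f = Re])
  have "pochhammer q (Suc m) = pochhammer q m * r"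
    by (simp add: pochhammer_Suc r_def add.commute)
  then have "(- 1) ^ Suc m * (Ipos n logQ a m t1 (j, p) * Ineg n logQ b m t2 (j, aw n j - p) / of_nat (aw n j))
      = (- 1) ^ Suc m * ((- 1) ^ m * pochhammer q m * chiK n j p a * exp (- r * t1))
        * (exp (r * t2) / (pochhammer q m * r) * chiK n j (aw n j - p) b) / of_nat (aw n j)"
    by (simp only: Ipos_twisted[OF assms] Ineg_twisted_dual[OF assms] q_def[symmetric] r_def[symmetric]
        times_divide_eq_left times_divide_eq_right mult.assoc)
  also have "\<dots> = - (chiK n j p a * chiK n j (aw n j - p) b / of_nat (aw n j)) * (exp (- r * t1) * exp (r * t2) / r)"
    using \<open>pochhammer q m \<noteq> 0\<close> \<open>r \<noteq> 0\<close> \<open>of_nat (aw n j) \<noteq> 0\<close> by (simp add: field_simps)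
  also have "exp (- r * t1) * exp (r * t2) = exp (r * (t2 - t1))"
    by (simp add: exp_add[symmetric] algebra_simps)
  finally show ?thesis
    by (simp only: r_def q_def)
qed

section \<open>Logarithmic series along residue classes\<close>

lemma sums_power_div_Ln:
  fixes w :: complex
  assumes "norm w < 1"
  shows "(\<lambda>N. w ^ N / of_nat N) sums - Ln (1 - w)"
  using sums_minus[OF Ln_series'[of "- w"]] assms by simp

text \<open>Averaging over the \<open>K\<close>-th roots of unity \<open>\<zeta>\<close> with weight \<open>\<zeta>^r\<close> keeps exactly the
  powers \<open>y^N\<close> with \<open>N \<equiv> r (mod K)\<close>.\<close>
lemma sum_unit_root_filter:
  assumes "0 < K"
  shows "(\<Sum>s\<in>{1..K}. unit_root K ^ (r * s) * (unit_root K powi (- int s)) ^ N)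
    = of_nat K * of_bool (int K dvd int r - int N)"
proof -
  have "unit_root K ^ (r * s) * (unit_root K powi (- int s)) ^ N
      = exp (2 * pi * \<i> * of_nat (r * s) / of_nat K) * exp (of_nat N * (2 * pi * \<i> * of_int (- int s) / of_nat K))" for s
    by (simp only: unit_root_pow unit_root_powi exp_of_nat_mult)
  also have "\<dots> s = exp (of_nat s * (2 * pi * \<i> * of_int (int r - int N) / of_nat K))" for s
    by (simp add: exp_add[symmetric] field_simps) (simp add: diff_divide_distrib)
  also have "\<dots> s = (unit_root K powi (int r - int N)) ^ s" for s
    by (simp only: unit_root_powi exp_of_nat_mult)
  finally show ?thesis
    using sum_unit_root_powers_atLeast1[OF assms, of "int r - int N"] by simp
qed

lemma range_mult_add_memI:
  assumes dvd: "int K dvd int r - int N" and "N \<noteq> 0" and r: "1 \<le> r" "r \<le> K"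
  shows "N \<in> range (\<lambda>m. K * m + r)"
proof -
  have "r \<le> N"
  proof (rule ccontr)
    assume "\<not> r \<le> N"
    then have "int K \<le> int r - int N"
      by (intro zdvd_imp_le dvd) simp
    with \<open>N \<noteq> 0\<close> r show False
      by linarith
  qed
  then have "int r - int N = - int (N - r)"
    by simp
  with dvd have "K dvd N - r"
    by (metis dvd_minus_iff int_dvd_int_iff)
  with \<open>r \<le> N\<close> have "N = K * ((N - r) div K) + r"
    by simp
  then show ?thesis
    by (metis rangeI)
qed

lemma norm_power_div_le:
  fixes y :: complex
  assumes "norm y \<le> 1" and "0 < K" and "1 \<le> r"
  shows "norm (y ^ (K * m + r) / of_nat (K * m + r)) \<le> norm y ^ m"
proof -
  have "norm (y ^ (K * m + r) / of_nat (K * m + r)) = norm y ^ (K * m + r) / real (K * m + r)"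
    by (simp only: norm_divide norm_power norm_of_nat)
  also have "\<dots> \<le> norm y ^ (K * m + r) / 1"
  proof (rule divide_left_mono)
    have "1 \<le> K * m + r"
      using assms by simp
    then show "1 \<le> real (K * m + r)"
      by (metis of_nat_1 of_nat_le_iff)
    then show "0 < real (K * m + r) * 1"
      by simp
  qed simp
  also have "\<dots> \<le> norm y ^ m"
    using assms by (simp add: power_decreasing trans_le_add1)
  finally show ?thesis .
qed

lemma has_sum_power_div_residue_class:
  fixes y :: complex
  assumes K: "0 < K" and r: "1 \<le> r" "r \<le> K" and y: "norm y < 1"
  shows "((\<lambda>m. y ^ (K * m + r) / of_nat (K * m + r)) has_sum
      - (\<Sum>s\<in>{1..K}. unit_root K ^ (r * s) * Ln (1 - unit_root K powi (- int s) * y)) / of_nat K) UNIV"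
proof -
  define c where "c s = unit_root K ^ (r * s)" for s
  define e where "e s = unit_root K powi (- int s)" for s
  define f where "f N = of_bool (int K dvd int r - int N) * y ^ N / of_nat N" for N
  have "(\<lambda>N. c s * ((e s * y) ^ N / of_nat N)) sums (c s * - Ln (1 - e s * y))" for s
    by (intro sums_mult sums_power_div_Ln) (simp add: e_def norm_mult y)
  then have "(\<lambda>N. \<Sum>s\<in>{1..K}. c s * ((e s * y) ^ N / of_nat N)) sums (\<Sum>s\<in>{1..K}. c s * - Ln (1 - e s * y))"
    by (rule sums_sum)
  moreover have "(\<Sum>s\<in>{1..K}. c s * ((e s * y) ^ N / of_nat N)) = of_nat K * f N" for N
  proof -
    have "(\<Sum>s\<in>{1..K}. c s * ((e s * y) ^ N / of_nat N)) = (\<Sum>s\<in>{1..K}. c s * e s ^ N) * (y ^ N / of_nat N)"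
      by (simp add: power_mult_distrib sum_distrib_right sum_divide_distrib mult.assoc)
    then show ?thesis
      using sum_unit_root_filter[OF K, of r N] by (simp add: c_def e_def f_def)
  qed
  ultimately have "(\<lambda>N. of_nat K * f N) sums (- (\<Sum>s\<in>{1..K}. c s * Ln (1 - e s * y)))"
    by (simp add: sum_negf)
  then have "(\<lambda>N. of_nat K * f N / of_nat K) sums (- (\<Sum>s\<in>{1..K}. c s * Ln (1 - e s * y)) / of_nat K)"
    by (rule sums_divide)
  then have "f sums (- (\<Sum>s\<in>{1..K}. c s * Ln (1 - e s * y)) / of_nat K)"
    using K by simp
  moreover have "f N = 0" if "N \<notin> range (\<lambda>m. K * m + r)" for N
    using range_mult_add_memI[of K r N] that r by (auto simp: f_def)
  ultimately have sums: "(\<lambda>m. y ^ (K * m + r) / of_nat (K * m + r))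
      sums (- (\<Sum>s\<in>{1..K}. c s * Ln (1 - e s * y)) / of_nat K)"
    using sums_mono_reindex[of "\<lambda>m. K * m + r" f] K by (simp add: strict_mono_def f_def)
  have "summable (\<lambda>m. norm (y ^ (K * m + r) / of_nat (K * m + r)))"
    using y K r norm_power_div_le[of y K r]
    by (intro summable_comparison_test[OF _ summable_geometric[of "norm y"]]) auto
  from norm_summable_imp_has_sum[OF this sums] show ?thesis
    by (simp add: c_def e_def)
qed

lemma has_sum_exp_div_shifted:
  assumes K: "0 < K" "a dvd K" and p: "1 \<le> p" "p \<le> a" and d: "Re d < 0"
  shows "((\<lambda>m. exp ((of_nat m + of_nat p / of_nat a) * d) / (of_nat m + of_nat p / of_nat a)) has_sum
      - (\<Sum>s\<in>{1..K}. unit_root a ^ (p * s) * Ln (1 - unit_root K powi (- int s) * exp (d / of_nat K)))) UNIV"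
proof -
  define r where "r = K div a * p"
  obtain k where k: "K = a * k"
    using K(2) by (rule dvdE)
  with K(1) have "0 < k"
    by simp
  have "0 < a"
    using p by simp
  have r_bounds: "1 \<le> r" "r \<le> K"
    using p \<open>0 < a\<close> \<open>0 < k\<close> by (simp_all add: r_def k)
  have "norm (exp (d / of_nat K)) < 1"
    using K d by (simp add: divide_neg_pos)
  from has_sum_cmult_right[OF has_sum_power_div_residue_class[OF K(1) r_bounds this], of "of_nat K"]
  have "((\<lambda>m. of_nat K * (exp (d / of_nat K) ^ (K * m + r) / of_nat (K * m + r))) has_sum
      - (\<Sum>s\<in>{1..K}. unit_root K ^ (r * s) * Ln (1 - unit_root K powi (- int s) * exp (d / of_nat K)))) UNIV"
    using K by simp
  moreover have "unit_root K ^ (r * s) = unit_root a ^ (p * s)" for s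
    using unit_root_pow_div_mult[OF K, of "p * s"] by (simp add: r_def mult.assoc)
  moreover have "of_nat K * (exp (d / of_nat K) ^ (K * m + r) / of_nat (K * m + r))
      = exp ((of_nat m + of_nat p / of_nat a) * d) / (of_nat m + of_nat p / of_nat a)" for m
  proof -
    have "(of_nat (K * m + r) :: complex) = of_nat K * (of_nat m + of_nat p / of_nat a)"
      using \<open>0 < a\<close> by (simp add: r_def k field_simps)
    moreover have "exp (d / of_nat K) ^ (K * m + r) = exp (of_nat (K * m + r) * (d / of_nat K))"
      by (rule exp_of_nat_mult[symmetric])
    ultimately show ?thesis
      using K by simp
  qed
  ultimately show ?thesis
    by simp
qed

section \<open>The residue pairing series\<close>

lemma has_sum_diff:
  fixes f g :: "'a \<Rightarrow> 'b::topological_ab_group_add"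
  assumes "(f has_sum a) A" and "(g has_sum b) A"
  shows "((\<lambda>x. f x - g x) has_sum (a - b)) A"
  using has_sum_add[OF assms(1), of "\<lambda>x. - g x" "- b"] assms(2) by (simp add: has_sum_uminus)

lemma has_sum_sum:
  fixes f :: "'i \<Rightarrow> 'a \<Rightarrow> 'b::topological_comm_monoid_add"
  assumes "finite I" and "\<And>i. i \<in> I \<Longrightarrow> (f i has_sum s i) A"
  shows "((\<lambda>x. \<Sum>i\<in>I. f i x) has_sum (\<Sum>i\<in>I. s i)) A"
  using assms by (induction I rule: finite_induct) (simp_all add: has_sum_add)

lemma has_sum_int_iff_nat:
  fixes f :: "int \<Rightarrow> 'a::topological_comm_monoid_add"
  assumes "\<And>m. m < 0 \<Longrightarrow> f m = 0"
  shows "(f has_sum v) UNIV \<longleftrightarrow> ((\<lambda>k. f (int k)) has_sum v) UNIV"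
proof -
  have "f m = 0" if "m \<notin> range int" for m
    using that by (metis assms nonneg_int_cases not_less rangeI)
  then have "(f has_sum v) UNIV \<longleftrightarrow> (f has_sum v) (range int)"
    by (intro has_sum_cong_neutral) auto
  also have "\<dots> \<longleftrightarrow> ((\<lambda>k. f (int k)) has_sum v) UNIV"
    by (simp add: has_sum_reindex comp_def)
  finally show ?thesis .
qed

lemma OmegaHas_fplus_fminus_iff:
  "OmegaHas n (fplus n logQ a t1) (fminus n logQ b t2) v
    \<longleftrightarrow> ((\<lambda>m. (- 1) ^ Suc m * pairH n (Ipos n logQ a m t1) (Ineg n logQ b m t2)) has_sum v) UNIV"
proof -
  have "pairH n (\<lambda>_. 0) w = 0" for w
    by (simp add: pairH_def)
  then show ?thesis
    unfolding OmegaHas_def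
    by (subst has_sum_int_iff_nat)
      (simp_all add: fplus_def fminus_def power_int_add flip: power_int_of_nat)
qed

lemma pairH_Ipos_Ineg:
  assumes n: "3 \<le> n"
  shows "(- 1) ^ Suc m * pairH n (Ipos n logQ a m t1) (Ineg n logQ b m t2)
    = (if m = 0 then - 2 * pi * \<i> * of_int (rk a) * of_real (degK n b)
         + of_int (rk a * rk b) * (logQ - t2 / of_nat (n - 2)) else 0)
      - of_int (rk a * rk b) / of_nat (n - 2) * (exp (of_nat (Suc m) * (t2 - t1)) / of_nat (Suc m))
      - (\<Sum>(j, p)\<in>twisted n. chiK n j p a * chiK n j (aw n j - p) b / of_nat (aw n j)
          * (exp ((of_nat m + of_nat p / of_nat (aw n j)) * (t2 - t1)) / (of_nat m + of_nat p / of_nat (aw n j))))"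
proof -
  have twisted: "(\<Sum>(j, p)\<in>twisted n. (- 1) ^ Suc m
        * (Ipos n logQ a m t1 (j, p) * Ineg n logQ b m t2 (j, aw n j - p) / of_nat (aw n j)))
      = - (\<Sum>(j, p)\<in>twisted n. chiK n j p a * chiK n j (aw n j - p) b / of_nat (aw n j)
          * (exp ((of_nat m + of_nat p / of_nat (aw n j)) * (t2 - t1)) / (of_nat m + of_nat p / of_nat (aw n j))))"
    unfolding sum_negf[symmetric]
  proof (intro sum.cong refl)
    fix x assume "x \<in> twisted n"
    then show "(case x of (j, p) \<Rightarrow> (- 1) ^ Suc m
          * (Ipos n logQ a m t1 (j, p) * Ineg n logQ b m t2 (j, aw n j - p) / of_nat (aw n j)))
        = - (case x of (j, p) \<Rightarrow> chiK n j p a * chiK n j (aw n j - p) b / of_nat (aw n j)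
          * (exp ((of_nat m + of_nat p / of_nat (aw n j)) * (t2 - t1)) / (of_nat m + of_nat p / of_nat (aw n j))))"
      by (cases x) (simp only: prod.case pairing_twisted mult_minus_left)
  qed
  have "(- 1) ^ Suc m * pairH n (Ipos n logQ a m t1) (Ineg n logQ b m t2)
      = (- 1) ^ Suc m * (Ipos n logQ a m t1 (0, 0) * Ineg n logQ b m t2 (0, 1))
        + (- 1) ^ Suc m * (Ipos n logQ a m t1 (0, 1) * Ineg n logQ b m t2 (0, 0))
        + (\<Sum>(j, p)\<in>twisted n. (- 1) ^ Suc m
            * (Ipos n logQ a m t1 (j, p) * Ineg n logQ b m t2 (j, aw n j - p) / of_nat (aw n j)))"
    by (simp only: pairH_def distrib_left sum_distrib_left case_prod_unfold)
  then show ?thesis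
    by (simp only: pairing_unit_point[OF n] pairing_point_unit[OF n] twisted) simp
qed

lemma has_sum_untwisted_series:
  assumes "0 < K" and "Re d < 0"
  shows "((\<lambda>m. exp (of_nat (Suc m) * d) / of_nat (Suc m)) has_sum
      - (\<Sum>s\<in>{1..K}. Ln (1 - unit_root K powi (- int s) * exp (d / of_nat K)))) UNIV"
  using has_sum_exp_div_shifted[OF assms(1) one_dvd order.refl order.refl assms(2)]
  by (simp add: add.commute unit_root_1[unfolded One_nat_def])

lemma has_sum_twisted_series:
  fixes W :: "nat \<Rightarrow> nat \<Rightarrow> complex"
  assumes "3 \<le> n" and "Re d < 0"
  shows "((\<lambda>m. \<Sum>(j, p)\<in>twisted n. W j p
        * (exp ((of_nat m + of_nat p / of_nat (aw n j)) * d) / (of_nat m + of_nat p / of_nat (aw n j))))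
      has_sum - (\<Sum>(j, p)\<in>twisted n. W j p * (\<Sum>s\<in>{1..kappa n}.
        unit_root (aw n j) ^ (p * s) * Ln (1 - unit_root (kappa n) powi (- int s) * exp (d / of_nat (kappa n)))))) UNIV"
  unfolding sum_negf[symmetric]
proof (rule has_sum_sum)
  fix i assume "i \<in> twisted n"
  moreover obtain j p where "i = (j, p)"
    by fastforce
  ultimately have "((\<lambda>m. exp ((of_nat m + of_nat p / of_nat (aw n j)) * d) / (of_nat m + of_nat p / of_nat (aw n j)))
      has_sum - (\<Sum>s\<in>{1..kappa n}. unit_root (aw n j) ^ (p * s)
        * Ln (1 - unit_root (kappa n) powi (- int s) * exp (d / of_nat (kappa n))))) UNIV"
    using assms by (intro has_sum_exp_div_shifted) (auto simp: twisted_def kappa_def aw_def)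
  from has_sum_cmult_right[OF this, of "W j p"] \<open>i = (j, p)\<close>
  show "((\<lambda>m. case i of (j, p) \<Rightarrow> W j p
        * (exp ((of_nat m + of_nat p / of_nat (aw n j)) * d) / (of_nat m + of_nat p / of_nat (aw n j))))
      has_sum - (case i of (j, p) \<Rightarrow> W j p * (\<Sum>s\<in>{1..kappa n}. unit_root (aw n j) ^ (p * s)
        * Ln (1 - unit_root (kappa n) powi (- int s) * exp (d / of_nat (kappa n)))))) UNIV"
    by simp
qed (simp add: twisted_def)

lemma sum_coefficient_expansion:
  "(\<Sum>s\<in>S. (R + (\<Sum>(j, p)\<in>T. W j p * z j p s)) * L s)
    = R * sum L S + (\<Sum>(j, p)\<in>T. W j p * (\<Sum>s\<in>S. z j p s * L s))"
  for R :: "'a::comm_semiring_1"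
  by (simp add: ring_distribs sum.distrib sum_distrib_left case_prod_unfold mult_ac sum.swap[of _ T])

lemma has_sum_pairing_series:
  assumes n: "3 \<le> n" and t: "Re t2 < Re t1"
  shows "((\<lambda>m. (- 1) ^ Suc m * pairH n (Ipos n logQ a m t1) (Ineg n logQ b m t2)) has_sum
      (- 2 * pi * \<i> * of_int (rk a) * of_real (degK n b) + of_int (rk a * rk b) * (logQ - t2 / of_nat (n - 2))
       + (\<Sum>s\<in>{1..kappa n}. (of_int (rk a * rk b) / of_nat (n - 2)
           + (\<Sum>(j, p)\<in>twisted n. chiK n j p a * chiK n j (aw n j - p) b / of_nat (aw n j) * unit_root (aw n j) ^ (p * s)))
         * Ln (1 - unit_root (kappa n) powi (- int s) * exp ((t2 - t1) / of_nat (kappa n)))))) UNIV"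
proof -
  define C where "C = - 2 * pi * \<i> * of_int (rk a) * of_real (degK n b) + of_int (rk a * rk b) * (logQ - t2 / of_nat (n - 2))"
  define R where "R = (of_int (rk a * rk b) / of_nat (n - 2) :: complex)"
  define W where "W j p = chiK n j p a * chiK n j (aw n j - p) b / of_nat (aw n j)" for j p
  have K: "0 < kappa n" and d: "Re (t2 - t1) < 0"
    using n t by (simp_all add: kappa_def)
  have "((\<lambda>m::nat. if m = 0 then C else 0) has_sum C) UNIV"
    by (rule has_sum_finite_neutralI[of "{0}"]) auto
  from has_sum_diff[OF has_sum_diff[OF this has_sum_cmult_right[OF has_sum_untwisted_series[OF K d], of R]]
      has_sum_twisted_series[OF n d, of W]]
  show ?thesis
    unfolding pairH_Ipos_Ineg[OF n] C_def[symmetric] R_def[symmetric] W_def[symmetric] sum_coefficient_expansion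
    by (simp add: add.assoc)
qed

theorem proposition9:
  fixes n :: nat and logQ t1 t2 :: complex and a b :: Kel
  assumes "3 \<le> n" and "finite (Ksupp a)" and "finite (Ksupp b)" and "Re t2 < Re t1"
  shows "OmegaHas n (fplus n logQ a t1) (fminus n logQ b t2)
     (- 2 * pi * \<i> * of_int (rk a) * of_real (degK n b)
      + of_int (rk a * rk b) * (logQ - t2 / of_nat (n - 2))
      + (\<Sum>s\<in>{1..kappa n}. of_int (int_pair n a (sigmaK n s b)) *
           Ln (1 - eta n powi (- int s) * exp ((t2 - t1) / of_nat (kappa n)))))"
proof -
  have "eta n = unit_root (kappa n)"
    by (simp add: eta_def unit_root_def)
  then show ?thesis
    using has_sum_pairing_series[OF assms(1,4), of logQ a b]
    by (simp add: OmegaHas_fplus_fminus_iff int_pair_sigmaK assms(1-3) mult_ac)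
qed

end
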